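(* Let $p$ be a prime and let $G$ be a finite subgroup of $\mathrm{M}(p,\mathbb{C})$ whose permutation part $\phi(G)$ is transitive. If $\mathrm{D}(p,\mathbb{C})\cap G$ is not contained in the group of scalar matrices, then $G$ is irreducible. Conversely, if $G$ is solvable and irreducible, then $\mathrm{D}(p,\mathbb{C})\cap G$ is not contained in the group of scalar matrices.
   Context: $\mathrm{M}(p,\mathbb{C})$ is the group of monomial matrices in $\mathrm{GL}(p,\mathbb{C})$, equal to $\mathrm{D}(p,\mathbb{C})\rtimes \mathrm{P}(p)$ with $\mathrm{D}(p,\mathbb{C})$ the invertible diagonal matrices and $\mathrm{P}(p)\cong\mathrm{Sym}(p)$ the permutation matrices (via $\alpha\mapsto[\delta_{i\alpha,j}]_{i,j}$). The map $\phi\colon \mathrm{M}(p,\mathbb{C})\to\mathrm{Sym}(p)$ sends $dt\mapsto t$; $\phi(G)$ is the permutation part of $G$. *)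

theory Defs
  imports "HOL-Analysis.Analysis" "HOL-Algebra.Solvable_Groups"
begin

text \<open>Matrices in GL(p,C) are modelled as complex^'n^'n with CARD('n) = p.\<close>

definition diag_mat :: "('n::finite \<Rightarrow> complex) \<Rightarrow> complex^'n^'n" where
  "diag_mat d = (\<chi> i j. if i = j then d i else 0)"

definition perm_mat :: "('n::finite \<Rightarrow> 'n) \<Rightarrow> complex^'n^'n" where
  "perm_mat \<alpha> = (\<chi> i j. if \<alpha> i = j then 1 else 0)"

definition monomial_mat :: "complex^'n^'n \<Rightarrow> bool" where
  "monomial_mat A \<longleftrightarrow> (\<exists>d \<alpha>. (\<forall>i. d i \<noteq> 0) \<and> \<alpha> permutes (UNIV::'n::finite set)
      \<and> A = diag_mat d ** perm_mat \<alpha>)"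

definition perm_part :: "complex^'n^'n \<Rightarrow> ('n::finite \<Rightarrow> 'n)" where
  "perm_part A = (THE \<alpha>. \<alpha> permutes (UNIV::'n set) \<and>
      (\<exists>d. (\<forall>i. d i \<noteq> 0) \<and> A = diag_mat d ** perm_mat \<alpha>))"

definition diagonal_mat :: "complex^'n^'n \<Rightarrow> bool" where
  "diagonal_mat A \<longleftrightarrow> (\<exists>d. (\<forall>i. d i \<noteq> 0) \<and> A = diag_mat (d::'n::finite \<Rightarrow> complex))"

definition mat_group :: "(complex^'n^'n) set \<Rightarrow> (complex^'n^'n) monoid" where
  "mat_group G = \<lparr>carrier = G, monoid.mult = (\<lambda>A B. A ** B), one = mat 1\<rparr>"

definition csubspace_vec :: "(complex^'n::finite) set \<Rightarrow> bool" where
  "csubspace_vec W \<longleftrightarrow> 0 \<in> W \<and> (\<forall>x\<in>W. \<forall>y\<in>W. x + y \<in> W) \<and> (\<forall>c. \<forall>x\<in>W. c *s x \<in> W)"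

definition irreducible_mat_group :: "(complex^'n^'n) set \<Rightarrow> bool" where
  "irreducible_mat_group G \<longleftrightarrow>
     \<not> (\<exists>W. csubspace_vec W \<and> W \<noteq> {0} \<and> W \<noteq> (UNIV::(complex^'n::finite) set) \<and>
          (\<forall>g\<in>G. \<forall>w\<in>W. g *v w \<in> W))"

end

theory Submission
  imports Defs "HOL-Algebra.Multiplicative_Group"
begin

(* Write phi for the permutation part and D for the invertible diagonal matrices.
   Conjugation by g in G permutes the diagonal entries of the elements of D \<inter> G
   according to phi(g), so "all elements of D \<inter> G agree at i and j" is a
   phi(G)-invariant equivalence relation on the p coordinates. Its classes all have the
   same size, which divides the prime p: the relation is equality or everything. If
   D \<inter> G is not scalar, the diagonal elements separate the coordinates, so a nonzero
   invariant subspace contains a coordinate vector, and by transitivity all of them.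

   Conversely, let D \<inter> G be scalar and G solvable. Some term N of the derived series
   is not diagonal while its commutators are, so phi(N) is an abelian normal subgroup
   of the transitive group phi(G). Hence phi(N) is transitive and regular, generated by
   the fixed-point-free permutation phi(h) of any non-diagonal h in N, and every element
   of N is a scalar times a power of h. An eigenvector v of h (which has finite order)
   is therefore an eigenvector of all of N. A permutation in phi(G) fixing a point x is
   determined by its value at phi(h) x, so the stabiliser of x has at most p - 1
   elements, and as G is N times scalars times lifts of this stabiliser, the orbit of v
   spans an invariant subspace of dimension at most p - 1. *)

section \<open>Monomial matrices\<close>

lemma diag_mat_times_perm_mat_nth:
  "(diag_mat d ** perm_mat \<alpha>) $ i $ j = (if \<alpha> i = j then d i else (0::complex))"
  unfolding diag_mat_def perm_mat_def matrix_matrix_mult_def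
  by (simp add: if_distrib[of "\<lambda>x. x * _"] cong: if_cong)

lemma perm_part_diag_mat_times_perm_mat:
  assumes "\<And>i. d i \<noteq> 0" and "\<alpha> permutes UNIV"
  shows "perm_part (diag_mat d ** perm_mat \<alpha>) = \<alpha>"
  unfolding perm_part_def
proof (rule the_equality)
  fix \<beta> assume "\<beta> permutes UNIV \<and> (\<exists>e. (\<forall>i. e i \<noteq> 0) \<and> diag_mat d ** perm_mat \<alpha> = diag_mat e ** perm_mat \<beta>)"
  then obtain e where e: "\<And>i. e i \<noteq> 0" and eq: "diag_mat d ** perm_mat \<alpha> = diag_mat e ** perm_mat \<beta>"
    by blast
  show "\<beta> = \<alpha>"
  proof
    fix i
    have "(diag_mat d ** perm_mat \<alpha>) $ i $ \<beta> i \<noteq> 0"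
      using e by (simp add: eq diag_mat_times_perm_mat_nth)
    then show "\<beta> i = \<alpha> i" by (auto simp: diag_mat_times_perm_mat_nth split: if_splits)
  qed
qed (use assms in blast)

(* The diagonal factor d in A = d t, i.e. A = diag_mat (mono_coeff A) ** perm_mat (perm_part A). *)
definition mono_coeff :: "complex^'n^'n \<Rightarrow> 'n::finite \<Rightarrow> complex" where
  "mono_coeff A i = A $ i $ perm_part A i"

lemma
  assumes "monomial_mat A"
  shows perm_part_permutes: "perm_part A permutes UNIV"
    and mono_coeff_nonzero: "mono_coeff A i \<noteq> 0"
    and monomial_mat_nth: "A $ i $ j = (if perm_part A i = j then mono_coeff A i else 0)"
proof -
  obtain d \<alpha> where d: "\<And>i. d i \<noteq> 0" and \<alpha>: "\<alpha> permutes UNIV" and A: "A = diag_mat d ** perm_mat \<alpha>"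
    using assms unfolding monomial_mat_def by blast
  have "perm_part A = \<alpha>"
    using perm_part_diag_mat_times_perm_mat[OF d \<alpha>] A by simp
  then show "perm_part A permutes UNIV" "mono_coeff A i \<noteq> 0"
    "A $ i $ j = (if perm_part A i = j then mono_coeff A i else 0)"
    using d \<alpha> by (auto simp: A mono_coeff_def diag_mat_times_perm_mat_nth)
qed

lemma
  assumes "\<alpha> permutes UNIV" and "\<And>i. d i \<noteq> 0"
    and nth: "\<And>i j. A $ i $ j = (if \<alpha> i = j then d i else 0)"
  shows monomial_matI: "monomial_mat A"
    and perm_part_eqI: "perm_part A = \<alpha>"
    and mono_coeff_eqI: "mono_coeff A = d"
proof -
  have A: "A = diag_mat d ** perm_mat \<alpha>"
    by (simp add: vec_eq_iff diag_mat_times_perm_mat_nth nth)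
  show "monomial_mat A"
    using A assms(1,2) unfolding monomial_mat_def by blast
  show \<alpha>: "perm_part A = \<alpha>"
    using A perm_part_diag_mat_times_perm_mat[OF assms(2,1)] by simp
  show "mono_coeff A = d"
    by (simp add: fun_eq_iff mono_coeff_def \<alpha> nth)
qed

lemma monomial_mat_times_nth:
  assumes "monomial_mat A" and "monomial_mat B"
  shows "(A ** B) $ i $ j =
    (if perm_part B (perm_part A i) = j then mono_coeff A i * mono_coeff B (perm_part A i) else 0)"
  unfolding matrix_matrix_mult_def
  by (simp add: monomial_mat_nth[OF assms(1)] monomial_mat_nth[OF assms(2)]
      if_distrib[of "\<lambda>x. x * _"] cong: if_cong)

lemma
  assumes "monomial_mat A" and "monomial_mat B"
  shows perm_part_times: "perm_part (A ** B) = perm_part B \<circ> perm_part A"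
    and mono_coeff_times: "mono_coeff (A ** B) i = mono_coeff A i * mono_coeff B (perm_part A i)"
proof -
  let ?\<alpha> = "perm_part B \<circ> perm_part A"
  let ?d = "\<lambda>i. mono_coeff A i * mono_coeff B (perm_part A i)"
  have \<alpha>: "?\<alpha> permutes UNIV"
    using assms by (simp add: permutes_compose perm_part_permutes)
  have d: "?d i \<noteq> 0" for i
    using assms by (simp add: mono_coeff_nonzero)
  have nth: "(A ** B) $ i $ j = (if ?\<alpha> i = j then ?d i else 0)" for i j
    using monomial_mat_times_nth[OF assms] by simp
  show "perm_part (A ** B) = ?\<alpha>"
    by (rule perm_part_eqI[OF \<alpha> d nth])
  show "mono_coeff (A ** B) i = ?d i"
    using mono_coeff_eqI[OF \<alpha> d nth] by simp
qed

lemma monomial_mat_vec_nth: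
  assumes "monomial_mat A"
  shows "(A *v v) $ i = mono_coeff A i * v $ perm_part A i"
  unfolding matrix_vector_mult_def
  by (simp add: monomial_mat_nth[OF assms] if_distrib[of "\<lambda>x. x * _"] cong: if_cong)

lemma
  assumes "c \<noteq> 0"
  shows monomial_mat_mat: "monomial_mat (mat c :: complex^'n::finite^'n)"
    and perm_part_mat: "perm_part (mat c :: complex^'n^'n) = id"
    and mono_coeff_mat: "mono_coeff (mat c :: complex^'n^'n) i = c"
proof -
  have nth: "(mat c :: complex^'n^'n) $ i $ j = (if id i = j then c else 0)" for i j
    by (simp add: mat_def)
  have c: "(\<lambda>_. c) i \<noteq> 0" for i :: 'n
    using assms by simp
  show "monomial_mat (mat c :: complex^'n::finite^'n)"
    by (rule monomial_matI[OF permutes_id c nth])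
  show "perm_part (mat c :: complex^'n^'n) = id"
    by (rule perm_part_eqI[OF permutes_id c nth])
  show "mono_coeff (mat c :: complex^'n^'n) i = c"
    using mono_coeff_eqI[OF permutes_id c nth] by simp
qed

lemma diagonal_mat_iff: "diagonal_mat A \<longleftrightarrow> monomial_mat A \<and> perm_part A = id"
proof
  assume "diagonal_mat A"
  then obtain d where d: "\<And>i. d i \<noteq> 0" and A: "A = diag_mat d"
    unfolding diagonal_mat_def by blast
  have nth: "A $ i $ j = (if id i = j then d i else 0)" for i j
    by (simp add: A diag_mat_def)
  show "monomial_mat A \<and> perm_part A = id"
    using monomial_matI[OF permutes_id d nth] perm_part_eqI[OF permutes_id d nth] by blast
next
  assume A: "monomial_mat A \<and> perm_part A = id"
  then have "A $ i $ j = diag_mat (mono_coeff A) $ i $ j" for i j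
    using monomial_mat_nth[of A i j] by (simp add: diag_mat_def)
  then have "A = diag_mat (mono_coeff A)"
    by (simp add: vec_eq_iff)
  then show "diagonal_mat A"
    unfolding diagonal_mat_def using A mono_coeff_nonzero by blast
qed

section \<open>Linear algebra on complex column vectors\<close>

lemma mat_scalar_mult_vec: "(mat c :: complex^'n::finite^'n) *v x = c *s x"
  by (simp add: vec_eq_iff matrix_vector_mult_def mat_def if_distrib[of "\<lambda>x. x * _"] cong: if_cong)

lemma csubspace_vec_iff_subspace: "csubspace_vec W \<longleftrightarrow> vec.subspace W"
  unfolding csubspace_vec_def vec.subspace_def ..

lemma subspace_eq_UNIV_if_axes:
  assumes "vec.subspace W" and "\<And>j. axis j 1 \<in> W"
  shows "W = UNIV"
proof -
  have "cart_basis \<subseteq> W"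
    using assms(2) by (auto simp: cart_basis_def)
  then have "vec.span cart_basis \<subseteq> W"
    using vec.span_minimal assms(1) by blast
  then show ?thesis
    by auto
qed

lemma finite_order_matrix_eigenvector:
  fixes A :: "complex^'n::finite^'n"
  assumes "0 < M" and order: "(*v) A ^^ M = id"
  obtains v c where "v \<noteq> 0" and "A *v v = c *s v"
proof -
  define \<omega> :: complex where "\<omega> = exp (2 * of_real pi * \<i> / of_nat M)"
  have \<omega>_pow_eq_1: "\<omega> ^ j = 1 \<longleftrightarrow> M dvd j" for j
  proof -
    have "\<omega> ^ j = exp (2 * of_real pi * \<i> * of_nat j / of_nat M)"
      by (simp add: \<omega>_def exp_of_nat_mult[symmetric] algebra_simps)
    then show ?thesis
      using complex_root_unity_eq_1[of M j] assms(1) by simp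
  qed
  obtain i :: 'n where True by blast
  define u :: "complex^'n" where "u = axis i 1"
  have "u \<noteq> 0"
    by (metis u_def axis_nth zero_index zero_neq_one)
  define w where "w z = (\<Sum>k<M. z ^ (M - k) *s ((*v) A ^^ k) u)" for z
  \<comment> \<open>\<open>w z\<close> is the projection of \<open>u\<close> onto the \<open>z\<close>-eigenspace, up to the factor \<open>M\<close>.\<close>
  have eigen: "A *v w z = z *s w z" if "z ^ M = 1" for z
  proof -
    define P where "P k = z ^ (Suc M - k) *s ((*v) A ^^ k) u" for k
    have "A *v w z = (\<Sum>k<M. P (Suc k))"
      by (simp add: w_def P_def vec.sum vector_scalar_commute)
    moreover have "z *s w z = (\<Sum>k<M. P k)"
      by (simp add: w_def P_def vec.scale_sum_right Suc_diff_le)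
    moreover have "P 0 = P M"
      using that order by (simp add: P_def)
    moreover have "P M + (\<Sum>k<M. P (Suc k)) = P M + (\<Sum>k<M. P k)"
      using sum.lessThan_Suc[of P M] sum.lessThan_Suc_shift[of P M] \<open>P 0 = P M\<close>
      by (simp add: add.commute)
    ultimately show ?thesis
      by simp
  qed
  have geometric: "(\<Sum>j<M. (\<omega> ^ (M - k)) ^ j) = (if k = 0 then of_nat M else 0)" if "k < M" for k
  proof (cases "k = 0")
    case True
    then show ?thesis
      using \<omega>_pow_eq_1[of M] by simp
  next
    case False
    then have "\<omega> ^ (M - k) \<noteq> 1"
      using \<omega>_pow_eq_1[of "M - k"] that by (auto dest: dvd_imp_le)
    moreover have "(\<omega> ^ (M - k)) ^ M = 1"
      using \<omega>_pow_eq_1[of "(M - k) * M"] by (simp add: power_mult)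
    ultimately show ?thesis
      using False by (simp add: geometric_sum)
  qed
  have "(\<Sum>j<M. w (\<omega> ^ j)) = (\<Sum>j<M. \<Sum>k<M. (\<omega> ^ (M - k)) ^ j *s ((*v) A ^^ k) u)"
    by (simp add: w_def power_mult[symmetric] mult.commute)
  also have "\<dots> = (\<Sum>k<M. \<Sum>j<M. (\<omega> ^ (M - k)) ^ j *s ((*v) A ^^ k) u)"
    by (rule sum.swap)
  also have "\<dots> = (\<Sum>k<M. (\<Sum>j<M. (\<omega> ^ (M - k)) ^ j) *s ((*v) A ^^ k) u)"
    by (simp add: vec.scale_sum_left)
  also have "\<dots> = (\<Sum>k<M. if k = 0 then of_nat M *s u else 0)"
    using geometric by (intro sum.cong) auto
  also have "\<dots> = of_nat M *s u"
    using assms(1) by simp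
  finally have "(\<Sum>j<M. w (\<omega> ^ j)) \<noteq> 0"
    using \<open>u \<noteq> 0\<close> assms(1) by simp
  then obtain j where "w (\<omega> ^ j) \<noteq> 0"
    by (meson sum.neutral)
  moreover have "(\<omega> ^ j) ^ M = 1"
    using \<omega>_pow_eq_1[of "j * M"] by (simp add: power_mult)
  ultimately show ?thesis
    using that eigen by blast
qed

section \<open>Invariant equivalences on a set of prime size\<close>

lemma invariant_equivp_trivial_or_total:
  fixes R :: "'n::finite \<Rightarrow> 'n \<Rightarrow> bool"
  assumes prime: "prime CARD('n)" and "equivp R"
    and inj: "\<And>\<tau>. \<tau> \<in> T \<Longrightarrow> inj \<tau>"
    and invariant: "\<And>\<tau> i j. \<tau> \<in> T \<Longrightarrow> R i j \<Longrightarrow> R (\<tau> i) (\<tau> j)"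
    and transitive: "\<And>i j. \<exists>\<tau>\<in>T. \<tau> i = j"
  shows "(\<forall>i j. R i j \<longrightarrow> i = j) \<or> (\<forall>i j. R i j)"
proof -
  define cl where "cl i = {j. R i j}" for i
  have cl_eq_iff: "cl i = cl j \<longleftrightarrow> R i j" for i j
    using \<open>equivp R\<close> unfolding cl_def by (metis equivp_def mem_Collect_eq)
  have card_cl_le: "card (cl i) \<le> card (cl j)" for i j
  proof -
    obtain \<tau> where \<tau>: "\<tau> \<in> T" "\<tau> i = j"
      using transitive by blast
    have "\<tau> ` cl i \<subseteq> cl j"
      using invariant[OF \<tau>(1)] \<tau>(2) by (auto simp: cl_def)
    then show ?thesis
      using card_mono card_image inj[OF \<tau>(1)] by (metis finite inj_on_subset subset_UNIV)
  qed
  obtain i0 :: 'n where True by blast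
  define k where "k = card (cl i0)"
  have card_cl: "card (cl i) = k" for i
    using card_cl_le[of i i0] card_cl_le[of i0 i] k_def by simp
  have "k * card (range cl) = card (\<Union>(range cl))"
  proof (rule card_partition)
    show "\<And>c1 c2. c1 \<in> range cl \<Longrightarrow> c2 \<in> range cl \<Longrightarrow> c1 \<noteq> c2 \<Longrightarrow> c1 \<inter> c2 = {}"
      using cl_eq_iff \<open>equivp R\<close> unfolding cl_def by (auto simp: equivp_def)
  qed (use card_cl in auto)
  also have "\<Union>(range cl) = UNIV"
    using \<open>equivp R\<close> by (auto simp: cl_def equivp_reflp)
  finally have "k dvd CARD('n)"
    by (metis dvd_triv_left)
  then consider "k = 1" | "k = CARD('n)"
    using prime by (auto simp: prime_nat_iff)
  then show ?thesis
  proof cases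
    case 1
    have "cl i = {i}" for i
    proof -
      obtain x where "cl i = {x}"
        using card_cl[of i] 1 card_1_singletonE by blast
      moreover have "i \<in> cl i"
        using \<open>equivp R\<close> by (simp add: cl_def equivp_reflp)
      ultimately show ?thesis
        by simp
    qed
    then show ?thesis
      by (simp add: cl_def set_eq_iff)
  next
    case 2
    then have "cl i = UNIV" for i
      using card_cl[of i] by (intro card_subset_eq) auto
    then show ?thesis
      by (simp add: cl_def set_eq_iff)
  qed
qed

section \<open>Groups of monomial matrices\<close>

lemma mat_group_simps [simp]:
  "carrier (mat_group G) = G" "(\<otimes>\<^bsub>mat_group G\<^esub>) = (**)" "\<one>\<^bsub>mat_group G\<^esub> = mat 1"
  by (simp_all add: mat_group_def)

locale monomial_group =
  fixes G :: "(complex^'n::finite^'n) set"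
  assumes group: "group (mat_group G)"
    and monomial: "\<And>A. A \<in> G \<Longrightarrow> monomial_mat A"
begin

abbreviation ginv :: "complex^'n^'n \<Rightarrow> complex^'n^'n" where
  "ginv \<equiv> m_inv (mat_group G)"

lemma one_mem: "mat 1 \<in> G"
  using group.is_monoid[OF group] monoid.one_closed by fastforce

lemma times_mem: "a \<in> G \<Longrightarrow> b \<in> G \<Longrightarrow> a ** b \<in> G"
  using monoid.m_closed[OF group.is_monoid[OF group], of a b] by simp

lemma ginv_mem: "a \<in> G \<Longrightarrow> ginv a \<in> G"
  using group.inv_closed[OF group, of a] by simp

lemma times_ginv: "a \<in> G \<Longrightarrow> a ** ginv a = mat 1"
  using group.r_inv[OF group, of a] by simp

lemma ginv_times: "a \<in> G \<Longrightarrow> ginv a ** a = mat 1"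
  using group.l_inv[OF group, of a] by simp

lemma ginv_times_cancel_left: "a \<in> G \<Longrightarrow> ginv a ** (a ** b) = b"
  by (simp add: matrix_mul_assoc ginv_times)

lemma times_ginv_cancel_left: "a \<in> G \<Longrightarrow> a ** (ginv a ** b) = b"
  by (simp add: matrix_mul_assoc times_ginv)

lemma times_ginv_cancel_right: "b \<in> G \<Longrightarrow> a ** ginv b ** b = a"
  by (simp add: matrix_mul_assoc[symmetric] ginv_times)

lemma perm_part_times_mem: "a \<in> G \<Longrightarrow> b \<in> G \<Longrightarrow> perm_part (a ** b) = perm_part b \<circ> perm_part a"
  using perm_part_times monomial by blast

lemma perm_part_ginv:
  assumes "a \<in> G"
  shows "perm_part a (perm_part (ginv a) i) = i" and "perm_part (ginv a) (perm_part a i) = i"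
proof -
  have "perm_part a \<circ> perm_part (ginv a) = id" "perm_part (ginv a) \<circ> perm_part a = id"
    using perm_part_times_mem[OF ginv_mem[OF assms] assms] perm_part_times_mem[OF assms ginv_mem[OF assms]]
    by (simp_all add: assms times_ginv ginv_times perm_part_mat)
  then show "perm_part a (perm_part (ginv a) i) = i" "perm_part (ginv a) (perm_part a i) = i"
    by (simp_all add: fun_eq_iff)
qed

lemma perm_part_inj: "a \<in> G \<Longrightarrow> inj (perm_part a)"
  using perm_part_permutes permutes_inj monomial by blast

lemma mono_coeff_ginv: "a \<in> G \<Longrightarrow> mono_coeff a i * mono_coeff (ginv a) (perm_part a i) = 1"
  using mono_coeff_times[OF monomial monomial, of a "ginv a" i]
  by (simp add: ginv_mem times_ginv mono_coeff_mat)

lemma mult_vec_nth: "a \<in> G \<Longrightarrow> (a *v v) $ i = mono_coeff a i * v $ perm_part a i"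
  using monomial_mat_vec_nth monomial by blast

lemma diagonal_iff_perm_part_id: "a \<in> G \<Longrightarrow> diagonal_mat a \<longleftrightarrow> perm_part a = id"
  using diagonal_mat_iff monomial by blast

lemma conj_diagonal:
  assumes g: "g \<in> G" and b: "b \<in> G" "diagonal_mat b"
  shows "diagonal_mat (g ** b ** ginv g)"
    and "mono_coeff (g ** b ** ginv g) i = mono_coeff b (perm_part g i)"
proof -
  have gb: "g ** b \<in> G" and pb: "perm_part b = id"
    using g b by (simp_all add: times_mem diagonal_iff_perm_part_id)
  have "perm_part (g ** b ** ginv g) = id"
    using g b gb by (simp add: perm_part_times_mem ginv_mem pb fun_eq_iff perm_part_ginv)
  then show "diagonal_mat (g ** b ** ginv g)"
    using diagonal_iff_perm_part_id gb g times_mem ginv_mem by blast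
  have "mono_coeff (g ** b ** ginv g) i
      = mono_coeff b (perm_part g i) * (mono_coeff g i * mono_coeff (ginv g) (perm_part g i))"
    using mono_coeff_times[OF monomial monomial] perm_part_times_mem g b gb ginv_mem pb by simp
  then show "mono_coeff (g ** b ** ginv g) i = mono_coeff b (perm_part g i)"
    using mono_coeff_ginv[OF g] by simp
qed

lemma perm_orbits_trivial_or_total:
  assumes prime: "prime CARD('n)" and H: "subgroup H (mat_group G)"
    and inj: "\<And>\<tau>. \<tau> \<in> T \<Longrightarrow> inj \<tau>" and transitive: "\<And>i j. \<exists>\<tau>\<in>T. \<tau> i = j"
    and normalises: "\<And>\<tau> h i. \<tau> \<in> T \<Longrightarrow> h \<in> H \<Longrightarrow> \<exists>h'\<in>H. perm_part h' (\<tau> i) = \<tau> (perm_part h i)"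
  shows "(\<forall>h\<in>H. perm_part h = id) \<or> (\<forall>i j. \<exists>h\<in>H. perm_part h i = j)"
proof -
  define R where "R i j \<longleftrightarrow> (\<exists>h\<in>H. perm_part h i = j)" for i j
  have HG: "h \<in> H \<Longrightarrow> h \<in> G" for h
    using subgroup.subset[OF H] by auto
  have equiv: "equivp R"
  proof (intro equivpI reflpI sympI transpI)
    have "mat 1 \<in> H"
      using subgroup.one_closed[OF H] by simp
    then show "R i i" for i
      unfolding R_def by (metis perm_part_mat id_apply zero_neq_one)
    show "R j i" if "R i j" for i j
      using that subgroup.m_inv_closed[OF H] perm_part_ginv(2) HG unfolding R_def by fastforce
    show "R i k" if "R i j" "R j k" for i j k
      using that subgroup.m_closed[OF H] perm_part_times_mem HG unfolding R_def
      by (metis comp_apply mat_group_simps(2))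
  qed
  have invariant: "R (\<tau> i) (\<tau> j)" if "\<tau> \<in> T" "R i j" for \<tau> i j
    using that normalises unfolding R_def by blast
  have "(\<forall>i j. R i j \<longrightarrow> i = j) \<or> (\<forall>i j. R i j)"
    by (rule invariant_equivp_trivial_or_total[OF prime equiv]) (fact inj invariant transitive)+
  then show ?thesis
  proof
    assume trivial: "\<forall>i j. R i j \<longrightarrow> i = j"
    have "R x (perm_part h x)" if "h \<in> H" for h x
      using that unfolding R_def by blast
    then have "perm_part h x = x" if "h \<in> H" for h x
      using trivial that by metis
    then show ?thesis
      by (auto simp: fun_eq_iff)
  qed (simp add: R_def)
qed

lemma orbit_span_invariant:
  assumes "g \<in> G" and "w \<in> vec.span ((\<lambda>g. g *v v) ` G)"
  shows "g *v w \<in> vec.span ((\<lambda>g. g *v v) ` G)"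
  using assms(2)
proof (induction rule: vec.span_induct)
  case (step x)
  then obtain g' where "g' \<in> G" "x = g' *v v"
    by blast
  then have "g *v x = (g ** g') *v v" and "g ** g' \<in> G"
    using assms(1) by (simp_all add: matrix_vector_mul_assoc times_mem)
  then show ?case
    by (metis image_eqI vec.span_base)
qed (simp add: vec.subspace_def matrix_vector_right_distrib vector_scalar_commute
    vec.span_zero vec.span_add vec.span_scale)

lemma invariant_subspace_axis:
  assumes separate: "\<And>i j. i \<noteq> j \<Longrightarrow> \<exists>b\<in>G. diagonal_mat b \<and> mono_coeff b i \<noteq> mono_coeff b j"
    and W: "vec.subspace W" and invariant: "\<And>g w. g \<in> G \<Longrightarrow> w \<in> W \<Longrightarrow> g *v w \<in> W"
    and w: "w \<in> W" "w $ i \<noteq> 0"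
  shows "axis i 1 \<in> W"
proof -
  have "\<exists>v\<in>W. v $ i = w $ i \<and> (\<forall>k\<in>S. v $ k = 0)" if "finite S" "i \<notin> S" for S
    using that
  proof (induction S rule: finite_induct)
    case empty
    then show ?case
      using w by blast
  next
    case (insert j S)
    then obtain v where v: "v \<in> W" "v $ i = w $ i" "\<forall>k\<in>S. v $ k = 0"
      by auto
    obtain b where b: "b \<in> G" "diagonal_mat b" "mono_coeff b i \<noteq> mono_coeff b j"
      using separate insert.prems by blast
    \<comment> \<open>Apply \<open>(b - b\<^sub>j) / (b\<^sub>i - b\<^sub>j)\<close>, which kills the \<open>j\<close>-th coordinate and keeps the \<open>i\<close>-th.\<close>
    define v' where "v' = (1 / (mono_coeff b i - mono_coeff b j)) *s (b *v v - mono_coeff b j *s v)"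
    have "v' \<in> W"
      unfolding v'_def using W v(1) invariant[OF b(1) v(1)]
      by (simp add: vec.subspace_scale vec.subspace_diff)
    moreover have "v' $ k = (mono_coeff b k - mono_coeff b j) * v $ k / (mono_coeff b i - mono_coeff b j)" for k
      using b by (simp add: v'_def mult_vec_nth diagonal_iff_perm_part_id algebra_simps divide_inverse)
    ultimately show ?case
      using v b(3) by (intro bexI[of _ v']) auto
  qed
  from this[of "UNIV - {i}"] obtain v where v: "v \<in> W" "v $ i = w $ i" "\<And>k. k \<noteq> i \<Longrightarrow> v $ k = 0"
    by auto
  have "axis i 1 = (1 / w $ i) *s v"
    using v w(2) by (auto simp: vec_eq_iff axis_def)
  then show ?thesis
    using vec.subspace_scale[OF W v(1)] by simp
qed

definition derived_series :: "nat \<Rightarrow> (complex^'n^'n) set" where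
  "derived_series k = (derived (mat_group G) ^^ k) G"

lemma derived_series_normal: "derived_series k \<lhd> mat_group G"
proof (induction k)
  case 0
  show ?case
    using group.normal_self[OF group] by (simp add: derived_series_def)
next
  case (Suc k)
  then show ?case
    using group.derived_is_normal[OF group] by (simp add: derived_series_def)
qed

lemma derived_series_subset: "derived_series k \<subseteq> G"
  using subgroup.subset[OF normal_imp_subgroup[OF derived_series_normal]] by simp

lemma commutator_mem_derived_series:
  assumes "a \<in> derived_series k" and "b \<in> derived_series k"
  shows "a ** b ** ginv a ** ginv b \<in> derived_series (Suc k)"
proof -
  have "a \<otimes>\<^bsub>mat_group G\<^esub> b \<otimes>\<^bsub>mat_group G\<^esub> ginv a \<otimes>\<^bsub>mat_group G\<^esub> ginv b
      \<in> derived_set (mat_group G) (derived_series k)"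
    using assms by blast
  then show ?thesis
    by (simp add: derived_series_def derived_def generate.incl)
qed

lemma perm_parts_commute_if_commutator_diagonal:
  assumes a: "a \<in> G" and b: "b \<in> G" and diagonal: "diagonal_mat (a ** b ** ginv a ** ginv b)"
  shows "perm_part a \<circ> perm_part b = perm_part b \<circ> perm_part a"
proof -
  define c where "c = a ** b ** ginv a ** ginv b"
  have c: "c \<in> G" "perm_part c = id"
    using a b diagonal diagonal_iff_perm_part_id by (simp_all add: c_def times_mem ginv_mem)
  have "c ** b ** a = a ** b ** (ginv a ** (ginv b ** b) ** a)"
    by (simp add: c_def matrix_mul_assoc)
  also have "\<dots> = a ** b"
    using a b by (simp add: ginv_times)
  finally have "perm_part (c ** b ** a) = perm_part (a ** b)"
    by simp
  then show ?thesis
    using a b c by (simp add: perm_part_times_mem times_mem)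
qed

lemma solvable_obtains_normal_subgroup_commuting_perm_parts:
  assumes solvable: "solvable (mat_group G)" and g: "g \<in> G" "\<not> diagonal_mat g"
  obtains N h where "N \<lhd> mat_group G"
    and "\<And>a b. a \<in> N \<Longrightarrow> b \<in> N \<Longrightarrow> perm_part a \<circ> perm_part b = perm_part b \<circ> perm_part a"
    and "h \<in> N" and "\<not> diagonal_mat h"
proof -
  define all_diagonal where "all_diagonal k \<longleftrightarrow> (\<forall>x\<in>derived_series k. diagonal_mat x)" for k
  obtain n where "derived_series n = {mat 1}"
    using solvable group.solvable_iff_trivial_derived_seq[OF group] by (auto simp: derived_series_def)
  then have "all_diagonal n"
    by (simp add: all_diagonal_def diagonal_mat_iff monomial_mat_mat perm_part_mat)
  moreover have "\<not> all_diagonal 0"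
    using g by (auto simp: all_diagonal_def derived_series_def)
  ultimately obtain k where k: "\<not> all_diagonal k" "all_diagonal (Suc k)"
    using ex_least_nat_less[of all_diagonal n] by blast
  then obtain h where h: "h \<in> derived_series k" "\<not> diagonal_mat h"
    unfolding all_diagonal_def by blast
  have "perm_part a \<circ> perm_part b = perm_part b \<circ> perm_part a"
    if ab: "a \<in> derived_series k" "b \<in> derived_series k" for a b
  proof (rule perm_parts_commute_if_commutator_diagonal)
    show "a \<in> G" "b \<in> G"
      using ab derived_series_subset by blast+
    show "diagonal_mat (a ** b ** ginv a ** ginv b)"
      using commutator_mem_derived_series[OF ab] k(2) unfolding all_diagonal_def by blast
  qed
  then show ?thesis
    by (rule that[OF derived_series_normal _ h])
qed

end

section \<open>Irreducibility from a non-scalar diagonal element\<close>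

locale transitive_monomial_group = monomial_group G for G :: "(complex^'n::finite^'n) set" +
  assumes transitive: "\<And>i j. \<exists>g\<in>G. perm_part g i = j"
begin

lemma irreducible_if_diagonals_separate:
  assumes separate: "\<And>i j. i \<noteq> j \<Longrightarrow> \<exists>b\<in>G. diagonal_mat b \<and> mono_coeff b i \<noteq> mono_coeff b j"
  shows "irreducible_mat_group G"
  unfolding irreducible_mat_group_def csubspace_vec_iff_subspace
proof clarify
  fix W assume W: "vec.subspace W" "W \<noteq> {0}" "W \<noteq> UNIV"
    and "\<forall>g\<in>G. \<forall>w\<in>W. g *v w \<in> W"
  then have invariant: "\<And>g w. g \<in> G \<Longrightarrow> w \<in> W \<Longrightarrow> g *v w \<in> W"
    by blast
  obtain w where w: "w \<in> W" "w \<noteq> 0"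
    using W(1,2) vec.subspace_0 by blast
  then obtain i where "w $ i \<noteq> 0"
    by (metis vec_eq_iff zero_index)
  then have axis_i: "axis i 1 \<in> W"
    using invariant_subspace_axis[OF separate W(1) invariant w(1)] by blast
  have "axis j 1 \<in> W" for j
  proof -
    obtain g where g: "g \<in> G" "perm_part g j = i"
      using transitive by blast
    have "g *v axis i 1 = mono_coeff g j *s axis j 1"
      using g perm_part_inj[OF g(1)] by (auto simp: vec_eq_iff mult_vec_nth axis_def inj_eq)
    then have "mono_coeff g j *s axis j 1 \<in> W"
      using invariant g(1) axis_i by metis
    moreover have "axis j 1 = (1 / mono_coeff g j) *s (mono_coeff g j *s axis j 1)"
      using mono_coeff_nonzero[OF monomial[OF g(1)]] by simp
    ultimately show ?thesis
      using vec.subspace_scale[OF W(1)] by metis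
  qed
  then show False
    using subspace_eq_UNIV_if_axes W(1,3) by blast
qed

lemma diagonals_separate_coordinates:
  assumes prime: "prime CARD('n)" and a: "a \<in> G" "diagonal_mat a" "\<nexists>c. a = mat c"
    and "i \<noteq> j"
  shows "\<exists>b\<in>G. diagonal_mat b \<and> mono_coeff b i \<noteq> mono_coeff b j"
proof -
  define R where "R i j \<longleftrightarrow> (\<forall>b\<in>G. diagonal_mat b \<longrightarrow> mono_coeff b i = mono_coeff b j)" for i j
  have equiv: "equivp R"
    unfolding R_def by (intro equivpI reflpI sympI transpI) auto
  have invariant: "R (\<tau> i) (\<tau> j)" if \<tau>: "\<tau> \<in> perm_part ` G" and "R i j" for \<tau> i j
    unfolding R_def
  proof (intro ballI impI)
    fix b assume b: "b \<in> G" "diagonal_mat b"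
    obtain g where g: "g \<in> G" "\<tau> = perm_part g"
      using \<tau> by blast
    have "g ** b ** ginv g \<in> G"
      using g b by (simp add: times_mem ginv_mem)
    then show "mono_coeff b (\<tau> i) = mono_coeff b (\<tau> j)"
      using \<open>R i j\<close> conj_diagonal[OF g(1) b] g(2) unfolding R_def by metis
  qed
  have "(\<forall>i j. R i j \<longrightarrow> i = j) \<or> (\<forall>i j. R i j)"
  proof (rule invariant_equivp_trivial_or_total[OF prime equiv])
    show "inj \<tau>" if "\<tau> \<in> perm_part ` G" for \<tau>
      using that perm_part_inj by blast
    show "\<exists>\<tau>\<in>perm_part ` G. \<tau> i = j" for i j
      using transitive by blast
  qed (fact invariant)
  moreover have "\<not> (\<forall>i j. R i j)"
  proof
    assume "\<forall>i j. R i j"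
    then have const: "mono_coeff a k = mono_coeff a i" for k
      using a(1,2) unfolding R_def by blast
    have "a $ k $ l = mat (mono_coeff a i) $ k $ l" for k l
      using monomial_mat_nth[OF monomial[OF a(1)], of k l] const[of k] a(1,2)
      by (auto simp: mat_def diagonal_iff_perm_part_id)
    then have "a = mat (mono_coeff a i)"
      by (simp add: vec_eq_iff)
    then show False
      using a(3) by blast
  qed
  ultimately have "\<not> R i j"
    using \<open>i \<noteq> j\<close> by blast
  then show ?thesis
    unfolding R_def by blast
qed

lemma irreducible_if_non_scalar_diagonal:
  assumes "prime CARD('n)" and "a \<in> G" "diagonal_mat a" "\<nexists>c. a = mat c"
  shows "irreducible_mat_group G"
  by (rule irreducible_if_diagonals_separate) (rule diagonals_separate_coordinates[OF assms])

end

section \<open>Reducibility of solvable groups with scalar diagonal part\<close>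

locale monomial_group_abelian_normal = transitive_monomial_group G
  for G :: "(complex^'n::finite^'n) set" +
  fixes N :: "(complex^'n^'n) set" and h :: "complex^'n^'n"
  assumes prime_card: "prime CARD('n)"
    and finite_G: "finite G"
    and scalar_diagonal: "\<And>g. g \<in> G \<Longrightarrow> diagonal_mat g \<Longrightarrow> \<exists>c. g = mat c"
    and normal: "N \<lhd> mat_group G"
    and perm_parts_commute: "\<And>a b. a \<in> N \<Longrightarrow> b \<in> N \<Longrightarrow> perm_part a \<circ> perm_part b = perm_part b \<circ> perm_part a"
    and h_mem: "h \<in> N" and h_non_diagonal: "\<not> diagonal_mat h"
begin

lemma N_subgroup: "subgroup N (mat_group G)"
  using normal by (rule normal_imp_subgroup)

lemma N_subset: "n \<in> N \<Longrightarrow> n \<in> G"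
  using subgroup.subset[OF N_subgroup] by auto

lemma N_one: "mat 1 \<in> N"
  using subgroup.one_closed[OF N_subgroup] by simp

lemma N_times: "a \<in> N \<Longrightarrow> b \<in> N \<Longrightarrow> a ** b \<in> N"
  using subgroup.m_closed[OF N_subgroup, of a b] by simp

lemma N_ginv: "a \<in> N \<Longrightarrow> ginv a \<in> N"
  using subgroup.m_inv_closed[OF N_subgroup] by simp

lemma N_conj: "g \<in> G \<Longrightarrow> n \<in> N \<Longrightarrow> ginv g ** n ** g \<in> N"
  using normal.inv_op_closed1[OF normal, of g n] by simp

lemma perm_part_commute: "a \<in> N \<Longrightarrow> b \<in> N \<Longrightarrow> perm_part a (perm_part b x) = perm_part b (perm_part a x)"
  using perm_parts_commute by (metis comp_apply)

lemma h_perm_part_ne_id: "perm_part h \<noteq> id"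
  using h_non_diagonal diagonal_iff_perm_part_id N_subset h_mem by blast

lemma N_transitive: "\<exists>n\<in>N. perm_part n x = y"
proof -
  have "(\<forall>n\<in>N. perm_part n = id) \<or> (\<forall>x y. \<exists>n\<in>N. perm_part n x = y)"
  proof (rule perm_orbits_trivial_or_total[OF prime_card N_subgroup])
    show "inj \<tau>" if "\<tau> \<in> perm_part ` G" for \<tau>
      using that perm_part_inj by blast
    show "\<exists>\<tau>\<in>perm_part ` G. \<tau> i = j" for i j
      using transitive by blast
    show "\<exists>n'\<in>N. perm_part n' (\<tau> i) = \<tau> (perm_part n i)"
      if \<tau>: "\<tau> \<in> perm_part ` G" and n: "n \<in> N" for \<tau> n i
    proof -
      obtain g where g: "g \<in> G" "\<tau> = perm_part g"
        using \<tau> by blast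
      have "perm_part (ginv g ** n ** g) (\<tau> i) = \<tau> (perm_part n i)"
        using g n by (simp add: perm_part_times_mem times_mem ginv_mem N_subset perm_part_ginv)
      then show ?thesis
        using N_conj[OF g(1) n] by blast
    qed
  qed
  then show ?thesis
    using h_mem h_perm_part_ne_id by blast
qed

(* Abelian and transitive, the permutation group of N acts regularly. *)
lemma N_perm_part_eq:
  assumes n1: "n1 \<in> N" and n2: "n2 \<in> N" and agree: "perm_part n1 x = perm_part n2 x"
  shows "perm_part n1 = perm_part n2"
proof -
  define n where "n = n1 ** ginv n2"
  have n: "n \<in> N" "perm_part n = perm_part (ginv n2) \<circ> perm_part n1"
    using n1 n2 by (simp_all add: n_def N_times N_ginv perm_part_times_mem N_subset ginv_mem)
  have "perm_part n x = x"
    using n(2) n2 agree by (simp add: perm_part_ginv N_subset)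
  have fixes_all: "perm_part n y = y" for y
  proof -
    obtain m where m: "m \<in> N" "perm_part m x = y"
      using N_transitive by blast
    show ?thesis
      using perm_part_commute[OF n(1) m(1), of x] \<open>perm_part n x = x\<close> m(2) by simp
  qed
  show ?thesis
  proof
    fix y
    have "perm_part n1 y = perm_part n2 (perm_part n y)"
      using n(2) n2 by (simp add: perm_part_ginv N_subset)
    then show "perm_part n1 y = perm_part n2 y"
      by (simp add: fixes_all)
  qed
qed

abbreviation h_pow :: "nat \<Rightarrow> complex^'n^'n" where
  "h_pow k \<equiv> h [^]\<^bsub>mat_group G\<^esub> k"

lemma h_pow_mem: "h_pow k \<in> N"
  by (induction k) (simp_all add: N_one N_times h_mem)

lemma perm_part_h_pow: "perm_part (h_pow k) = perm_part h ^^ k"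
proof (induction k)
  case (Suc k)
  then show ?case
    using h_pow_mem[of k] h_mem by (simp add: perm_part_times_mem N_subset)
qed (simp add: perm_part_mat)

lemma mult_vec_h_pow: "(*v) (h_pow k) = (*v) h ^^ k"
proof (induction k)
  case (Suc k)
  have "(*v) (h_pow (Suc k)) = (*v) (h_pow k) \<circ> (*v) h"
    by (simp add: fun_eq_iff matrix_vector_mul_assoc)
  then show ?case
    using Suc.IH by (simp add: funpow_Suc_right del: funpow.simps)
qed (simp add: fun_eq_iff)

lemma h_pow_eigenvector: "h *v v = c *s v \<Longrightarrow> h_pow k *v v = c ^ k *s v"
  by (induction k) (simp_all add: matrix_vector_mul_assoc[symmetric] vector_scalar_commute)

lemma h_eigenvector:
  obtains v c where "v \<noteq> 0" and "h *v v = c *s v"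
proof (rule finite_order_matrix_eigenvector)
  show "0 < order (mat_group G)"
    using finite_G one_mem by (auto simp: order_def card_gt_0_iff)
  have "h_pow (order (mat_group G)) = mat 1"
    using group.pow_order_eq_1[OF group] h_mem N_subset by simp
  then show "(*v) h ^^ order (mat_group G) = id"
    using mult_vec_h_pow[of "order (mat_group G)"] by (simp add: fun_eq_iff)
qed

lemma powers_of_h_transitive: "\<exists>k. (perm_part h ^^ k) x = y"
proof -
  have generate: "generate (mat_group G) {h} = range h_pow"
    using group.generate_pow_on_finite_carrier[OF group, of h] finite_G h_mem N_subset by auto
  have "(\<forall>n\<in>range h_pow. perm_part n = id) \<or> (\<forall>x y. \<exists>n\<in>range h_pow. perm_part n x = y)"
  proof (rule perm_orbits_trivial_or_total[OF prime_card])
    show "subgroup (range h_pow) (mat_group G)"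
      using group.generate_is_subgroup[OF group, of "{h}"] generate h_mem N_subset by simp
    show "inj \<tau>" if "\<tau> \<in> perm_part ` N" for \<tau>
      using that perm_part_inj N_subset by blast
    show "\<exists>\<tau>\<in>perm_part ` N. \<tau> i = j" for i j
      using N_transitive by blast
    show "\<exists>n'\<in>range h_pow. perm_part n' (\<tau> i) = \<tau> (perm_part n i)"
      if "\<tau> \<in> perm_part ` N" and "n \<in> range h_pow" for \<tau> n i
      using that perm_part_commute h_pow_mem by blast
  qed
  moreover have "h \<in> range h_pow"
    using image_eqI[of h h_pow 1] by simp
  ultimately have "\<exists>n\<in>range h_pow. perm_part n x = y"
    using h_perm_part_ne_id by blast
  then show ?thesis
    using perm_part_h_pow by auto
qed

lemma h_no_fixed_point: "perm_part h x \<noteq> x"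
proof
  assume "perm_part h x = x"
  moreover have "perm_part (mat 1 :: complex^'n^'n) x = x"
    by (simp add: perm_part_mat)
  ultimately have "perm_part h = perm_part (mat 1)"
    using N_perm_part_eq[OF h_mem N_one, of x] by simp
  then show False
    using h_perm_part_ne_id by (simp add: perm_part_mat)
qed

lemma N_common_eigenvector:
  assumes eigen: "h *v v = c *s v" and n: "n \<in> N"
  shows "\<exists>c'. n *v v = c' *s v"
proof -
  obtain x :: 'n where True
    by blast
  obtain k where "(perm_part h ^^ k) x = perm_part n x"
    using powers_of_h_transitive by blast
  then have "perm_part n = perm_part (h_pow k)"
    using N_perm_part_eq[OF n h_pow_mem] perm_part_h_pow by metis
  then have "perm_part (n ** ginv (h_pow k)) = id"
    using n h_pow_mem[of k] by (simp add: perm_part_times_mem N_subset ginv_mem fun_eq_iff perm_part_ginv)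
  then obtain d where d: "n ** ginv (h_pow k) = mat d"
    using scalar_diagonal diagonal_iff_perm_part_id n h_pow_mem[of k] by (meson N_subset ginv_mem times_mem)
  have "n = mat d ** h_pow k"
    using times_ginv_cancel_right[OF N_subset[OF h_pow_mem], of n k] d by simp
  then have "n *v v = d *s (h_pow k *v v)"
    by (simp add: matrix_vector_mul_assoc[symmetric] mat_scalar_mult_vec)
  then show ?thesis
    using h_pow_eigenvector[OF eigen] by auto
qed

definition stabiliser :: "'n \<Rightarrow> ('n \<Rightarrow> 'n) set" where
  "stabiliser x = {\<tau> \<in> perm_part ` G. \<tau> x = x}"

lemma stabiliser_centralising_h:
  assumes g: "g \<in> G" and fixes_x: "perm_part g x = x"
    and fixes_hx: "perm_part g (perm_part h x) = perm_part h x"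
  shows "perm_part g = id"
proof -
  have "perm_part (ginv g) x = x"
    using perm_part_ginv(2)[OF g, of x] fixes_x by simp
  then have "perm_part (ginv g ** h ** g) x = perm_part h x"
    using g h_mem fixes_hx by (simp add: perm_part_times_mem times_mem ginv_mem N_subset)
  then have "perm_part (ginv g ** h ** g) = perm_part h"
    using N_perm_part_eq[OF N_conj[OF g h_mem] h_mem] by blast
  then have conj_eq: "perm_part g (perm_part h (perm_part (ginv g) y)) = perm_part h y" for y
    using g h_mem by (simp add: perm_part_times_mem times_mem ginv_mem N_subset fun_eq_iff)
  have commute: "perm_part g (perm_part h y) = perm_part h (perm_part g y)" for y
    using conj_eq[of "perm_part g y"] by (simp add: perm_part_ginv(2)[OF g])
  have fixes_powers: "perm_part g ((perm_part h ^^ k) x) = (perm_part h ^^ k) x" for k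
    by (induction k) (simp_all add: fixes_x commute)
  show ?thesis
  proof
    fix y
    obtain k where "(perm_part h ^^ k) x = y"
      using powers_of_h_transitive by blast
    then show "perm_part g y = id y"
      using fixes_powers[of k] by simp
  qed
qed

lemma stabiliser_eq_if_agree_at_h:
  assumes "\<tau>1 \<in> stabiliser x" "\<tau>2 \<in> stabiliser x" and agree: "\<tau>1 (perm_part h x) = \<tau>2 (perm_part h x)"
  shows "\<tau>1 = \<tau>2"
proof -
  obtain g1 g2 where g1: "g1 \<in> G" "\<tau>1 = perm_part g1" "\<tau>1 x = x"
    and g2: "g2 \<in> G" "\<tau>2 = perm_part g2" "\<tau>2 x = x"
    using assms(1,2) unfolding stabiliser_def by blast
  have undo_g2: "perm_part (ginv g2) (\<tau>2 y) = y" for y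
    using perm_part_ginv(2)[OF g2(1)] g2(2) by simp
  have g: "g1 ** ginv g2 \<in> G" "perm_part (g1 ** ginv g2) = perm_part (ginv g2) \<circ> \<tau>1"
    using g1 g2 by (simp_all add: times_mem ginv_mem perm_part_times_mem)
  have "perm_part (g1 ** ginv g2) x = x"
    using g(2) g1(3) undo_g2[of x] g2(3) by simp
  moreover have "perm_part (g1 ** ginv g2) (perm_part h x) = perm_part h x"
    using g(2) agree undo_g2[of "perm_part h x"] by simp
  ultimately have "perm_part (ginv g2) \<circ> \<tau>1 = id"
    using stabiliser_centralising_h[OF g(1)] g(2) by simp
  then have "\<tau>2 (perm_part (ginv g2) (\<tau>1 y)) = \<tau>2 y" for y
    by (simp add: fun_eq_iff)
  then show "\<tau>1 = \<tau>2"
    using perm_part_ginv(1)[OF g2(1)] g2(2) by (simp add: fun_eq_iff)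
qed

lemma card_stabiliser_le: "card (stabiliser x) \<le> CARD('n) - 1"
proof -
  have "\<tau> (perm_part h x) \<noteq> x" if \<tau>: "\<tau> \<in> stabiliser x" for \<tau>
  proof
    assume "\<tau> (perm_part h x) = x"
    moreover obtain g where g: "g \<in> G" "\<tau> = perm_part g" "\<tau> x = x"
      using \<tau> unfolding stabiliser_def by blast
    ultimately have "perm_part g (perm_part h x) = perm_part g x"
      by simp
    then have "perm_part h x = x"
      using inj_eq[OF perm_part_inj[OF g(1)]] by simp
    then show False
      using h_no_fixed_point by blast
  qed
  moreover have "inj_on (\<lambda>\<tau>. \<tau> (perm_part h x)) (stabiliser x)"
    using stabiliser_eq_if_agree_at_h by (blast intro: inj_onI)
  ultimately have "card (stabiliser x) \<le> card (UNIV - {x})"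
    by (intro card_inj_on_le) auto
  then show ?thesis
    by (simp add: card_Diff_singleton)
qed

(* Every g factors as an element of N, a scalar and a lift of a stabiliser element. *)
lemma orbit_in_span_stabiliser_lifts:
  assumes eigen: "h *v v = c *s v" and g: "g \<in> G"
  shows "g *v v \<in> vec.span ((\<lambda>\<tau>. inv_into G perm_part \<tau> *v v) ` stabiliser x)"
proof -
  obtain n where n: "n \<in> N" "perm_part n x = perm_part (ginv g) x"
    using N_transitive by blast
  define g0 where "g0 = n ** g"
  have g0: "g0 \<in> G" "perm_part g0 x = x"
    using n g by (simp_all add: g0_def times_mem N_subset perm_part_times_mem perm_part_ginv)
  then have stab: "perm_part g0 \<in> stabiliser x"
    unfolding stabiliser_def by blast
  define r where "r = inv_into G perm_part (perm_part g0)"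
  have r: "r \<in> G" "perm_part r = perm_part g0"
    using g0(1) by (simp_all add: r_def inv_into_into f_inv_into_f)
  have "perm_part (g0 ** ginv r) = perm_part (ginv r) \<circ> perm_part r"
    using g0(1) r by (simp add: perm_part_times_mem ginv_mem)
  also have "\<dots> = id"
    using perm_part_ginv(2)[OF r(1)] by (simp add: fun_eq_iff)
  finally obtain d where d: "g0 ** ginv r = mat d"
    using scalar_diagonal diagonal_iff_perm_part_id g0(1) r(1) by (meson ginv_mem times_mem)
  obtain c' where c': "(ginv r ** ginv n ** r) *v v = c' *s v"
    using N_common_eigenvector[OF eigen N_conj[OF r(1) N_ginv[OF n(1)]]] by blast
  have "g0 = mat d ** r"
    using times_ginv_cancel_right[OF r(1), of g0] d by simp
  then have "g = ginv n ** (mat d ** r)"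
    using ginv_times_cancel_left[OF N_subset[OF n(1)], of g] by (simp add: g0_def)
  then have "g *v v = d *s ((ginv n ** r) *v v)"
    by (simp add: matrix_vector_mul_assoc[symmetric] mat_scalar_mult_vec vector_scalar_commute)
  moreover have "ginv n ** r = r ** (ginv r ** ginv n ** r)"
    using times_ginv_cancel_left[OF r(1), of "ginv n ** r"] by (simp add: matrix_mul_assoc)
  moreover have "(r ** (ginv r ** ginv n ** r)) *v v = c' *s (r *v v)"
    using c' by (simp add: matrix_vector_mul_assoc[symmetric] vector_scalar_commute)
  ultimately have "g *v v = (d * c') *s (r *v v)"
    by simp
  moreover have "r *v v \<in> vec.span ((\<lambda>\<tau>. inv_into G perm_part \<tau> *v v) ` stabiliser x)"
    using stab by (intro vec.span_base) (simp add: r_def)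
  ultimately show ?thesis
    using vec.span_scale by simp
qed

lemma not_irreducible: "\<not> irreducible_mat_group G"
proof -
  obtain v c where v: "v \<noteq> 0" "h *v v = c *s v"
    using h_eigenvector by blast
  obtain x :: 'n where True
    by blast
  define B where "B = (\<lambda>\<tau>. inv_into G perm_part \<tau> *v v) ` stabiliser x"
  define W where "W = vec.span ((\<lambda>g. g *v v) ` G)"
  have "finite (stabiliser x)"
    using finite_G by (simp add: stabiliser_def)
  then have "card B \<le> card (stabiliser x)"
    unfolding B_def by (rule card_image_le)
  then have B: "finite B" "card B \<le> CARD('n) - 1"
    using \<open>finite (stabiliser x)\<close> card_stabiliser_le[of x] by (simp_all add: B_def)
  have "(\<lambda>g. g *v v) ` G \<subseteq> vec.span B"
    using orbit_in_span_stabiliser_lifts[OF v(2)] unfolding B_def by blast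
  then have "W \<subseteq> vec.span B"
    unfolding W_def by (rule vec.span_minimal) simp
  then have "vec.dim W \<le> CARD('n) - 1"
    using vec.dim_le_card[OF _ B(1)] B(2) order_trans by blast
  then have "vec.dim W < CARD('n)"
    using diff_less[OF zero_less_one zero_less_card_finite] by (rule le_less_trans)
  then have "W \<noteq> UNIV"
    using vec_dim_card[where 'a = complex and 'n = 'n] by auto
  moreover have "v \<in> W"
    unfolding W_def using one_mem by (metis image_eqI matrix_vector_mul_lid vec.span_base)
  then have "W \<noteq> {0}"
    using v(1) by blast
  moreover have "\<forall>g\<in>G. \<forall>w\<in>W. g *v w \<in> W"
    using orbit_span_invariant unfolding W_def by blast
  moreover have "vec.subspace W"
    by (simp add: W_def)
  ultimately show ?thesis
    unfolding irreducible_mat_group_def csubspace_vec_iff_subspace by blast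
qed

end

lemma (in transitive_monomial_group) exists_non_diagonal:
  assumes "1 < CARD('n)"
  obtains g where "g \<in> G" and "\<not> diagonal_mat g"
proof -
  obtain i :: 'n where True
    by blast
  have "UNIV - {i} \<noteq> {}"
    using assms by (metis card_Diff_singleton card.empty UNIV_I diff_is_0_eq leD)
  then obtain j where "j \<in> UNIV - {i}"
    by (meson ex_in_conv)
  then have "i \<noteq> j"
    by blast
  moreover obtain g where "g \<in> G" "perm_part g i = j"
    using transitive by blast
  ultimately show ?thesis
    using that diagonal_iff_perm_part_id by force
qed

lemma (in transitive_monomial_group) reducible_if_solvable_scalar_diagonal:
  assumes "prime CARD('n)" and "finite G" and solvable: "solvable (mat_group G)"
    and scalar: "\<And>g. g \<in> G \<Longrightarrow> diagonal_mat g \<Longrightarrow> \<exists>c. g = mat c"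
  shows "\<not> irreducible_mat_group G"
proof -
  obtain g where "g \<in> G" "\<not> diagonal_mat g"
    using prime_gt_1_nat[OF assms(1)] by (rule exists_non_diagonal)
  then obtain N h where "N \<lhd> mat_group G"
    and "\<And>a b. a \<in> N \<Longrightarrow> b \<in> N \<Longrightarrow> perm_part a \<circ> perm_part b = perm_part b \<circ> perm_part a"
    and "h \<in> N" and "\<not> diagonal_mat h"
    by (rule solvable_obtains_normal_subgroup_commuting_perm_parts[OF solvable]) (rule that)
  then interpret monomial_group_abelian_normal G N h
    using transitive_monomial_group_axioms assms(1,2) scalar
    by (intro monomial_group_abelian_normal.intro monomial_group_abelian_normal_axioms.intro) auto
  show ?thesis
    by (rule not_irreducible)
qed

theorem theorem2p12:
  fixes G :: "(complex^'n::finite^'n) set"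
  assumes "prime CARD('n)"
    and "finite G"
    and "group (mat_group G)"
    and "\<forall>A\<in>G. monomial_mat A"
    and "\<forall>i j. \<exists>g\<in>G. perm_part g i = j"
  shows "((\<exists>g\<in>G. diagonal_mat g \<and> \<not> (\<exists>c. g = mat c)) \<longrightarrow> irreducible_mat_group G)
       \<and> ((solvable (mat_group G) \<and> irreducible_mat_group G)
            \<longrightarrow> (\<exists>g\<in>G. diagonal_mat g \<and> \<not> (\<exists>c. g = mat c)))"
proof -
  interpret transitive_monomial_group G
    unfolding transitive_monomial_group_def transitive_monomial_group_axioms_def monomial_group_def
    using assms(3-5) by blast
  show ?thesis
    using irreducible_if_non_scalar_diagonal[OF assms(1)]
      reducible_if_solvable_scalar_diagonal[OF assms(1,2)] by blast
qed

end
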